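(* Let $A\in\mathcal{L}(\mathcal{H})$ be a bounded operator. Then $[A,\mathsf{E}_{\mathrm{can}}(\Theta)]=0$ for all Borel sets $\Theta\subseteq[0,2\pi)$ if and only if $A=cI$ for some $c\in\mathbb{C}$.
   Context: $\mathcal{H}\simeq L^2(\mathbb{R})$ is the Hilbert space of a single-mode field with orthonormal number basis $\{|n\rangle\}_{n\in\mathbb{N}}$, $\mathbb{N}=\{0,1,2,\dots\}$. The canonical phase observable is the POVM $\mathsf{E}_{\mathrm{can}}:\mathcal{B}([0,2\pi))\to\mathcal{L}(\mathcal{H})$ given (with weakly convergent sums) by $\mathsf{E}_{\mathrm{can}}(\Theta)=\sum_{m,n=0}^\infty \frac{1}{2\pi}\int_\Theta e^{i(m-n)\theta}\,d\theta\,|m\rangle\langle n|$. *)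

theory Defs
  imports "HOL-Analysis.Analysis"
begin

text \<open>The single-mode Hilbert space H is modelled concretely as l^2(N): vectors are
  coordinate functions (coefficients in the number basis |n>) that are square-summable.\<close>

definition l2 :: "(nat \<Rightarrow> complex) set" where
  "l2 = {x. summable (\<lambda>n. (cmod (x n))\<^sup>2)}"

definition l2_norm :: "(nat \<Rightarrow> complex) \<Rightarrow> real" where
  "l2_norm x = sqrt (\<Sum>n. (cmod (x n))\<^sup>2)"

definition bounded_op :: "((nat \<Rightarrow> complex) \<Rightarrow> (nat \<Rightarrow> complex)) \<Rightarrow> bool" where
  "bounded_op A \<longleftrightarrow>
     (\<forall>x\<in>l2. A x \<in> l2) \<and>
     (\<forall>x\<in>l2. \<forall>y\<in>l2. \<forall>a b. A (\<lambda>n. a * x n + b * y n) = (\<lambda>n. a * A x n + b * A y n)) \<and>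
     (\<exists>C. \<forall>x\<in>l2. l2_norm (A x) \<le> C * l2_norm x)"

text \<open>Matrix elements of the canonical phase POVM:
  <m| E_can(Theta) |n> = (1/(2 pi)) int_Theta exp(i (m-n) theta) d theta.\<close>

definition can_phase_coeff :: "real set \<Rightarrow> int \<Rightarrow> complex" where
  "can_phase_coeff \<Theta> k =
     complex_of_real (1 / (2 * pi)) *
       (LINT \<theta>:\<Theta>|lborel. exp (\<i> * of_int k * complex_of_real \<theta>))"

text \<open>Action of E_can(Theta) on a vector x in l2: the m-th coordinate is
  sum_n <m|E_can(Theta)|n> x_n (absolutely convergent for x in l2).\<close>

definition E_can :: "real set \<Rightarrow> (nat \<Rightarrow> complex) \<Rightarrow> (nat \<Rightarrow> complex)" where
  "E_can \<Theta> x = (\<lambda>m. \<Sum>n. can_phase_coeff \<Theta> (int m - int n) * x n)"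

end

theory Submission
  imports Defs
begin

text \<open>If \<open>A\<close> commutes with every \<open>E_can \<Theta>\<close>, it commutes with every finite linear combination of
  them. Cut the circle into \<open>N\<close> arcs of length \<open>2\<pi>/N\<close> and weight the \<open>r\<close>-th arc by
  \<open>exp (-i p 2\<pi>r/N)\<close>: by orthogonality of the \<open>N\<close>-th roots of unity the resulting operator has
  matrix \<open>\<kappa> s(m - n)\<close> with \<open>\<kappa> \<noteq> 0\<close>, where \<open>s(j) = 1/j\<close> for \<open>j \<equiv> p (mod N)\<close> and \<open>s(j) = 0\<close>
  otherwise. As \<open>N \<rightarrow> \<infinity>\<close> everything except the entry \<open>j = p\<close> tends to zero in \<open>l2\<close>, so in the
  limit \<open>A\<close> commutes entrywise with the shifts of the number basis: \<open><m|A|n+p> = <m-p|A|n>\<close>.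
  Hence \<open>A |n> = c |n>\<close> for one constant \<open>c\<close>, and by boundedness \<open>A = c I\<close> on all of \<open>l2\<close>.
  Conversely, Bessel's inequality shows that \<open>E_can \<Theta>\<close> maps \<open>l2\<close> into itself, so scalars
  commute with it.\<close>

section \<open>Characters of the circle\<close>

definition circle_char :: "int \<Rightarrow> real \<Rightarrow> complex" where
  "circle_char l t = exp (\<i> * of_int l * complex_of_real t)"

lemma circle_char_has_vector_derivative:
  "(circle_char l has_vector_derivative (\<i> * of_int l * circle_char l t)) (at t within T)"
proof -
  have "((\<lambda>t. exp (t *\<^sub>R (\<i> * of_int l))) has_vector_derivative
          exp (t *\<^sub>R (\<i> * of_int l)) * (\<i> * of_int l)) (at t within T)"
    by (rule exp_scaleR_has_vector_derivative_right)
  moreover have "(\<lambda>t. exp (t *\<^sub>R (\<i> * of_int l))) = circle_char l"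
    by (auto simp: circle_char_def scaleR_conv_of_real mult_ac)
  ultimately show ?thesis
    by (simp add: circle_char_def scaleR_conv_of_real mult_ac)
qed

lemma continuous_on_circle_char [continuous_intros]:
  "continuous_on S f \<Longrightarrow> continuous_on S (\<lambda>x. circle_char l (f x))"
  unfolding circle_char_def by (intro continuous_intros)

lemma circle_char_0 [simp]: "circle_char 0 t = 1"
  by (simp add: circle_char_def)

lemma circle_char_at_0 [simp]: "circle_char l 0 = 1"
  by (simp add: circle_char_def)

lemma circle_char_mult: "circle_char a t * circle_char b t = circle_char (a + b) t"
  by (simp add: circle_char_def exp_add[symmetric] algebra_simps)

lemma circle_char_add: "circle_char l (s + t) = circle_char l s * circle_char l t"
  by (simp add: circle_char_def exp_add[symmetric] algebra_simps)

lemma cnj_circle_char: "cnj (circle_char l t) = circle_char (- l) t"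
  by (simp add: circle_char_def exp_cnj)

lemma circle_char_mult_cnj: "circle_char a t * cnj (circle_char b t) = circle_char (a - b) t"
  by (simp add: cnj_circle_char circle_char_mult)

lemma circle_char_power: "circle_char l (real r * t) = circle_char l t ^ r"
proof -
  have "circle_char l (real r * t) = exp (of_nat r * (\<i> * of_int l * complex_of_real t))"
    by (simp add: circle_char_def mult_ac)
  then show ?thesis by (simp add: exp_of_nat_mult circle_char_def)
qed

lemma circle_char_eq_1_iff: "circle_char l t = 1 \<longleftrightarrow> (\<exists>n::int. l * t = 2 * n * pi)"
  by (simp add: circle_char_def exp_eq_1)

lemma circle_char_period [simp]: "circle_char l (2 * pi) = 1"
  unfolding circle_char_eq_1_iff by (rule exI[of _ l]) simp

lemma circle_char_root_eq_1_iff: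
  assumes "N > 0"
  shows "circle_char k (2 * pi / N) = 1 \<longleftrightarrow> int N dvd k"
proof -
  have "k * (2 * pi / N) = 2 * n * pi \<longleftrightarrow> k = int N * n" for n :: int
  proof -
    have "k * (2 * pi / N) = 2 * n * pi \<longleftrightarrow> real_of_int k = real N * real_of_int n"
      using assms by (simp add: field_simps)
    also have "\<dots> \<longleftrightarrow> k = int N * n"
      by (metis of_int_eq_iff of_int_mult of_int_of_nat_eq)
    finally show ?thesis .
  qed
  then show ?thesis by (simp add: circle_char_eq_1_iff dvd_def)
qed

lemma sum_circle_char_roots:
  assumes "N > 0"
  shows "(\<Sum>r<N. circle_char k (2 * pi * real r / real N)) = (if int N dvd k then of_nat N else 0)"
proof -
  define z where "z = circle_char k (2 * pi / N)"
  have pw: "circle_char k (2 * pi * real r / real N) = z ^ r" for r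
    unfolding z_def using circle_char_power[of k r "2 * pi / N"] by (simp add: mult_ac)
  show ?thesis
  proof (cases "int N dvd k")
    case True
    then have "z = 1" using circle_char_root_eq_1_iff[OF assms] by (simp add: z_def)
    then show ?thesis using True by (simp add: pw)
  next
    case False
    then have "z \<noteq> 1" using circle_char_root_eq_1_iff[OF assms] by (simp add: z_def)
    moreover have "z ^ N = 1" using pw[of N] assms by simp
    ultimately show ?thesis using False by (simp add: pw geometric_sum)
  qed
qed

lemma set_integrable_continuous_on_period:
  fixes f :: "real \<Rightarrow> complex"
  assumes "continuous_on {0..2*pi} f" "S \<in> sets borel" "S \<subseteq> {0..2*pi}"
  shows "set_integrable lborel S f"
  using set_integrable_subset[of lborel "{0..2*pi}" f S] borel_integrable_compact[OF _ assms(1)] assms(2,3)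
  by (auto simp: set_integrable_def)

lemma set_integral_sum:
  fixes f :: "'i \<Rightarrow> 'a \<Rightarrow> complex"
  assumes "\<And>i. i \<in> I \<Longrightarrow> set_integrable M A (f i)"
  shows "(LINT x:A|M. (\<Sum>i\<in>I. f i x)) = (\<Sum>i\<in>I. LINT x:A|M. f i x)"
proof -
  have "(\<lambda>x. indicator A x *\<^sub>R (\<Sum>i\<in>I. f i x)) = (\<lambda>x. \<Sum>i\<in>I. indicator A x *\<^sub>R f i x)"
    by (simp only: scaleR_sum_right)
  then show ?thesis
    using assms unfolding set_lebesgue_integral_def set_integrable_def
    by (simp only:) (rule Bochner_Integration.integral_sum)
qed

lemma set_integral_cnj: "(LINT x:A|M. cnj (f x)) = cnj (LINT x:A|M. f x)"
proof -
  have "(\<lambda>x. indicator A x *\<^sub>R cnj (f x)) = (\<lambda>x. cnj (indicator A x *\<^sub>R f x))"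
    by (auto simp: indicator_def fun_eq_iff)
  then show ?thesis
    unfolding set_lebesgue_integral_def by (simp only:) (rule Bochner_Integration.integral_cnj)
qed

lemma set_integral_mult_cnj_self:
  "(LINT x:A|M. f x * cnj (f x)) = complex_of_real (LINT x:A|M. (cmod (f x))\<^sup>2)"
proof -
  have "(\<lambda>x. f x * cnj (f x)) = (\<lambda>x. complex_of_real ((cmod (f x))\<^sup>2))"
    by (simp only: complex_norm_square)
  then show ?thesis by (simp only: set_integral_complex_of_real)
qed

lemma set_integral_subset_mono_period:
  fixes f :: "real \<Rightarrow> real"
  assumes "continuous_on {0..2*pi} f" "\<And>t. 0 \<le> f t" "\<Theta> \<in> sets borel" "\<Theta> \<subseteq> {0..2*pi}"
  shows "(LINT t:\<Theta>|lborel. f t) \<le> (LINT t:{0..2*pi}|lborel. f t)"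
proof -
  have int: "integrable lborel (\<lambda>t. indicator {0..2*pi} t *\<^sub>R f t)"
    using borel_integrable_compact[OF _ assms(1)] by simp
  then have "integrable lborel (\<lambda>t. indicator \<Theta> t *\<^sub>R f t)"
    using set_integrable_subset[of lborel "{0..2*pi}" f \<Theta>] assms(3,4)
    by (auto simp: set_integrable_def)
  then show ?thesis
    unfolding set_lebesgue_integral_def
    using int assms(2,4) by (intro integral_mono) (auto simp: indicator_def)
qed

lemma set_integral_indicator_period:
  fixes f :: "real \<Rightarrow> complex"
  assumes "\<Theta> \<in> sets borel" "\<Theta> \<subseteq> {0..2*pi}" "continuous_on {0..2*pi} f"
  shows "set_integrable lborel {0..2*pi} (\<lambda>t. indicator \<Theta> t * f t)"
    and "(LINT t:{0..2*pi}|lborel. indicator \<Theta> t * f t) = (LINT t:\<Theta>|lborel. f t)"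
proof -
  have eq: "(\<lambda>t. indicator {0..2*pi} t *\<^sub>R (indicator \<Theta> t * f t)) = (\<lambda>t. indicator \<Theta> t *\<^sub>R f t)"
    using assms(2) by (auto simp: indicator_def fun_eq_iff)
  have "set_integrable lborel \<Theta> f"
    using assms by (intro set_integrable_continuous_on_period)
  then show "set_integrable lborel {0..2*pi} (\<lambda>t. indicator \<Theta> t * f t)"
    unfolding set_integrable_def eq .
  show "(LINT t:{0..2*pi}|lborel. indicator \<Theta> t * f t) = (LINT t:\<Theta>|lborel. f t)"
    unfolding set_lebesgue_integral_def eq ..
qed

lemma set_integral_circle_char_Icc:
  assumes "a \<le> b"
  shows "(LINT t:{a..b}|lborel. circle_char l t) =
    (if l = 0 then complex_of_real (b - a) else (circle_char l b - circle_char l a) / (\<i> * of_int l))"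
proof (cases "l = 0")
  case True
  then show ?thesis using assms by (simp add: set_integral_const scaleR_conv_of_real)
next
  case False
  have "(LBINT t=a..b. circle_char l t) = (LINT t:{a..b}|lborel. circle_char l t)"
    using assms by (rule interval_integral_Icc)
  moreover have "(LBINT t=a..b. circle_char l t)
      = circle_char l b / (\<i> * of_int l) - circle_char l a / (\<i> * of_int l)"
  proof (rule interval_integral_FTC_finite)
    show "continuous_on {min a b..max a b} (circle_char l)"
      by (intro continuous_intros continuous_on_id)
    fix x
    have "((\<lambda>t. circle_char l t * (1 / (\<i> * of_int l))) has_vector_derivative
        (\<i> * of_int l * circle_char l x) * (1 / (\<i> * of_int l))) (at x within {min a b..max a b})"
      by (intro has_vector_derivative_mult_left circle_char_has_vector_derivative)
    then show "((\<lambda>t. circle_char l t / (\<i> * of_int l)) has_vector_derivative circle_char l x)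
        (at x within {min a b..max a b})"
      using False by simp
  qed
  ultimately show ?thesis using False by (simp add: diff_divide_distrib)
qed

lemma set_integral_circle_char_Ico:
  assumes "a \<le> b"
  shows "(LINT t:{a..<b}|lborel. circle_char l t) = (LINT t:{a..b}|lborel. circle_char l t)"
proof (rule set_integral_cong_set)
  show "set_borel_measurable lborel {a..b} (circle_char l)"
       "set_borel_measurable lborel {a..<b} (circle_char l)"
    unfolding set_borel_measurable_def circle_char_def by measurable
  show "AE x in lborel. (x \<in> {a..b}) = (x \<in> {a..<b})"
    using AE_lborel_singleton[of b] by eventually_elim auto
qed

lemma set_integral_circle_char_period:
  "(LINT t:{0..2*pi}|lborel. circle_char l t) = (if l = 0 then complex_of_real (2*pi) else 0)"
  using set_integral_circle_char_Icc[of 0 "2*pi" l] by simp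

lemma sum_if_inj_eq:
  assumes "finite J" "inj_on \<phi> J" "j \<in> J"
  shows "(\<Sum>k\<in>J. if \<phi> j = \<phi> k then f k else (0::'a::comm_monoid_add)) = f j"
proof -
  have "(\<Sum>k\<in>J. if \<phi> j = \<phi> k then f k else 0) = (\<Sum>k\<in>J. if j = k then f k else 0)"
    using assms by (intro sum.cong refl) (auto dest: inj_onD)
  then show ?thesis using assms by simp
qed

lemma set_integral_trig_poly_mult_cnj:
  fixes b :: "'j \<Rightarrow> complex" and \<phi> :: "'j \<Rightarrow> int"
  assumes "finite J" "inj_on \<phi> J"
  shows "(LINT t:{0..2*pi}|lborel. (\<Sum>j\<in>J. b j * circle_char (\<phi> j) t) * cnj (\<Sum>j\<in>J. b j * circle_char (\<phi> j) t))
     = complex_of_real (2*pi * (\<Sum>j\<in>J. (cmod (b j))\<^sup>2))"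
proof -
  have expand: "(\<Sum>j\<in>J. b j * circle_char (\<phi> j) t) * cnj (\<Sum>j\<in>J. b j * circle_char (\<phi> j) t) =
      (\<Sum>j\<in>J. \<Sum>k\<in>J. (b j * cnj (b k)) * circle_char (\<phi> j - \<phi> k) t)" for t
    unfolding sum_product cnj_sum
    by (intro sum.cong refl) (simp add: circle_char_mult_cnj[symmetric] mult_ac)
  have "(LINT t:{0..2*pi}|lborel. (\<Sum>j\<in>J. \<Sum>k\<in>J. (b j * cnj (b k)) * circle_char (\<phi> j - \<phi> k) t))
     = (\<Sum>j\<in>J. \<Sum>k\<in>J. (b j * cnj (b k)) * (LINT t:{0..2*pi}|lborel. circle_char (\<phi> j - \<phi> k) t))"
    using assms(1)
    by (simp add: set_integral_sum set_integrable_continuous_on_period continuous_intros)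
  also have "\<dots> = (\<Sum>j\<in>J. \<Sum>k\<in>J. if \<phi> j = \<phi> k then (b j * cnj (b k)) * complex_of_real (2*pi) else 0)"
    by (intro sum.cong refl) (simp add: set_integral_circle_char_period)
  also have "\<dots> = (\<Sum>j\<in>J. (b j * cnj (b j)) * complex_of_real (2*pi))"
    using assms by (intro sum.cong refl) (rule sum_if_inj_eq[where f="\<lambda>k. _ * cnj (b k) * _"])
  also have "\<dots> = complex_of_real (2*pi * (\<Sum>j\<in>J. (cmod (b j))\<^sup>2))"
    by (simp add: complex_norm_square[symmetric] sum_distrib_left mult_ac)
  finally show ?thesis by (simp only: expand)
qed

lemma set_integral_trig_poly_norm_sq:
  fixes b :: "'j \<Rightarrow> complex" and \<phi> :: "'j \<Rightarrow> int"
  assumes "finite J" "inj_on \<phi> J"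
  shows "(LINT t:{0..2*pi}|lborel. (cmod (\<Sum>j\<in>J. b j * circle_char (\<phi> j) t))\<^sup>2)
    = 2*pi * (\<Sum>j\<in>J. (cmod (b j))\<^sup>2)"
  using set_integral_trig_poly_mult_cnj[OF assms, of b]
  by (simp only: set_integral_mult_cnj_self of_real_eq_iff)

section \<open>Bessel's inequality on a subset of the circle\<close>

text \<open>The sign convention pairs \<open>P\<close> with \<open>exp (i j t)\<close>, which is the one appearing in \<open>can_phase_coeff\<close>.\<close>

definition fourier_coeff_on :: "real set \<Rightarrow> (real \<Rightarrow> complex) \<Rightarrow> int \<Rightarrow> complex" where
  "fourier_coeff_on \<Theta> P j = (LINT t:\<Theta>|lborel. P t * circle_char j t) / of_real (2*pi)"

lemma set_integral_mult_cnj_fourier_sum: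
  assumes "\<Theta> \<in> sets borel" "\<Theta> \<subseteq> {0..2*pi}" "continuous_on {0..2*pi} P"
  shows "(LINT t:\<Theta>|lborel. P t * cnj (\<Sum>j\<in>J. fourier_coeff_on \<Theta> P j * circle_char (-j) t))
    = of_real (2*pi * (\<Sum>j\<in>J. (cmod (fourier_coeff_on \<Theta> P j))\<^sup>2))"
proof -
  let ?F = "fourier_coeff_on \<Theta> P"
  have "(\<lambda>t. P t * cnj (\<Sum>j\<in>J. ?F j * circle_char (-j) t))
      = (\<lambda>t. \<Sum>j\<in>J. cnj (?F j) * (P t * circle_char j t))"
    by (simp add: sum_distrib_left cnj_circle_char mult_ac)
  then have "(LINT t:\<Theta>|lborel. P t * cnj (\<Sum>j\<in>J. ?F j * circle_char (-j) t))
      = (\<Sum>j\<in>J. cnj (?F j) * (LINT t:\<Theta>|lborel. P t * circle_char j t))"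
    using assms
    by (simp add: set_integral_sum set_integrable_continuous_on_period continuous_intros)
  also have "\<dots> = (\<Sum>j\<in>J. of_real (2*pi) * (?F j * cnj (?F j)))"
    by (simp add: fourier_coeff_on_def mult_ac)
  also have "\<dots> = of_real (2*pi * (\<Sum>j\<in>J. (cmod (?F j))\<^sup>2))"
    by (simp add: complex_norm_square[symmetric] sum_distrib_left)
  finally show ?thesis .
qed

text \<open>The defect in Bessel's inequality is the mean square distance between \<open>indicator \<Theta> * P\<close> and
  the trigonometric polynomial built from its coefficients.\<close>

lemma bessel_inequality_on:
  assumes \<Theta>: "\<Theta> \<in> sets borel" "\<Theta> \<subseteq> {0..2*pi}" and P: "continuous_on {0..2*pi} P"
    and J: "finite J"
  shows "(\<Sum>j\<in>J. (cmod (fourier_coeff_on \<Theta> P j))\<^sup>2) \<le> (LINT t:\<Theta>|lborel. (cmod (P t))\<^sup>2) / (2*pi)"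
proof -
  define S where "S = (\<Sum>j\<in>J. (cmod (fourier_coeff_on \<Theta> P j))\<^sup>2)"
  define g where "g t = (\<Sum>j\<in>J. fourier_coeff_on \<Theta> P j * circle_char (-j) t)" for t
  define h where "h t = indicator \<Theta> t * P t - g t" for t
  have g_cont: "continuous_on {0..2*pi} g"
    unfolding g_def by (intro continuous_intros continuous_on_id)
  have expand: "h t * cnj (h t) = indicator \<Theta> t * (P t * cnj (P t)) - indicator \<Theta> t * (P t * cnj (g t))
      - indicator \<Theta> t * (g t * cnj (P t)) + g t * cnj (g t)" for t
    by (cases "t \<in> \<Theta>") (simp_all add: h_def algebra_simps)
  have cross: "(LINT t:\<Theta>|lborel. P t * cnj (g t)) = of_real (2*pi*S)"
    unfolding g_def S_def using \<Theta> P by (rule set_integral_mult_cnj_fourier_sum)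
  have cross': "(LINT t:\<Theta>|lborel. g t * cnj (P t)) = of_real (2*pi*S)"
    using set_integral_cnj[of M \<Theta> "\<lambda>t. P t * cnj (g t)" for M] cross by (simp add: mult.commute)
  have g_sq: "(LINT t:{0..2*pi}|lborel. (cmod (g t))\<^sup>2) = 2*pi*S"
    unfolding g_def S_def using J by (subst set_integral_trig_poly_norm_sq) (auto simp: inj_on_def)
  have "(LINT t:{0..2*pi}|lborel. h t * cnj (h t)) =
     (LINT t:{0..2*pi}|lborel. indicator \<Theta> t * (P t * cnj (P t)))
     - (LINT t:{0..2*pi}|lborel. indicator \<Theta> t * (P t * cnj (g t)))
     - (LINT t:{0..2*pi}|lborel. indicator \<Theta> t * (g t * cnj (P t)))
     + (LINT t:{0..2*pi}|lborel. g t * cnj (g t))"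
    unfolding expand using \<Theta> P g_cont
    by (simp add: set_integral_indicator_period set_integrable_continuous_on_period continuous_intros)
  also have "\<dots> = of_real (LINT t:\<Theta>|lborel. (cmod (P t))\<^sup>2) - of_real (2*pi*S)"
    using \<Theta> P g_cont
    by (simp add: set_integral_indicator_period continuous_intros set_integral_mult_cnj_self
        cross cross' g_sq)
  finally have "(LINT t:{0..2*pi}|lborel. (cmod (h t))\<^sup>2) = (LINT t:\<Theta>|lborel. (cmod (P t))\<^sup>2) - 2*pi*S"
    by (simp only: set_integral_mult_cnj_self of_real_diff[symmetric] of_real_eq_iff)
  moreover have "0 \<le> (LINT t:{0..2*pi}|lborel. (cmod (h t))\<^sup>2)"
    unfolding set_lebesgue_integral_def by (intro integral_nonneg_AE) (auto simp: indicator_def)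
  ultimately show ?thesis unfolding S_def by (simp add: field_simps)
qed

section \<open>Square-summable sequences and bounded operators\<close>

lemma l2_linear_combination:
  assumes "x \<in> l2" "y \<in> l2"
  shows "(\<lambda>n. a * x n + b * y n) \<in> l2"
proof -
  have le: "norm ((cmod (a * x n + b * y n))\<^sup>2)
      \<le> 2 * (cmod a)\<^sup>2 * (cmod (x n))\<^sup>2 + 2 * (cmod b)\<^sup>2 * (cmod (y n))\<^sup>2" for n
  proof -
    have "cmod (a * x n + b * y n) \<le> cmod a * cmod (x n) + cmod b * cmod (y n)"
      using norm_triangle_ineq[of "a * x n" "b * y n"] by (simp add: norm_mult)
    then have "(cmod (a * x n + b * y n))\<^sup>2 \<le> (cmod a * cmod (x n) + cmod b * cmod (y n))\<^sup>2"
      by (intro power_mono) auto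
    also have "\<dots> \<le> 2 * (cmod a)\<^sup>2 * (cmod (x n))\<^sup>2 + 2 * (cmod b)\<^sup>2 * (cmod (y n))\<^sup>2"
      using sum_squares_bound[of "cmod a * cmod (x n)" "cmod b * cmod (y n)"]
      by (simp add: power2_eq_square algebra_simps)
    finally show ?thesis by simp
  qed
  have s: "summable (\<lambda>n. 2 * (cmod a)\<^sup>2 * (cmod (x n))\<^sup>2 + 2 * (cmod b)\<^sup>2 * (cmod (y n))\<^sup>2)"
    using assms unfolding l2_def by (intro summable_add summable_mult) auto
  have "summable (\<lambda>n. (cmod (a * x n + b * y n))\<^sup>2)"
    by (rule summable_comparison_test[OF _ s]) (use le in blast)
  then show ?thesis unfolding l2_def by simp
qed

lemma l2_finite_support:
  assumes "finite S" "\<And>n. n \<notin> S \<Longrightarrow> x n = 0"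
  shows "x \<in> l2"
  unfolding l2_def using assms by (auto intro!: summable_finite[of S])

lemma l2_zero: "(\<lambda>n. 0) \<in> l2"
  by (rule l2_finite_support[of "{}"]) auto

lemma summable_mult_if_square_summable:
  fixes a b :: "nat \<Rightarrow> complex"
  assumes "summable (\<lambda>n. (cmod (a n))\<^sup>2)" "summable (\<lambda>n. (cmod (b n))\<^sup>2)"
  shows "summable (\<lambda>n. a n * b n)"
proof -
  have le: "norm (norm (a n * b n)) \<le> ((cmod (a n))\<^sup>2 + (cmod (b n))\<^sup>2) / 2" for n
    using sum_squares_bound[of "cmod (a n)" "cmod (b n)"] by (simp add: norm_mult)
  have "summable (\<lambda>n. norm (a n * b n))"
    by (rule summable_comparison_test[OF _ summable_divide[OF summable_add[OF assms], of 2]])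
      (use le in auto)
  then show ?thesis by (rule summable_norm_cancel)
qed

lemma abs_coord_le_l2_norm:
  assumes "z \<in> l2"
  shows "cmod (z m) \<le> l2_norm z"
proof -
  have "(\<Sum>n\<in>{m}. (cmod (z n))\<^sup>2) \<le> (\<Sum>n. (cmod (z n))\<^sup>2)"
    by (rule sum_le_suminf) (use assms in \<open>auto simp: l2_def\<close>)
  then show ?thesis unfolding l2_norm_def by (simp add: real_le_rsqrt)
qed

lemma l2_tail_tendsto_0:
  assumes "x \<in> l2"
  shows "(\<lambda>K. \<Sum>k. (cmod (if k < K then 0 else x k))\<^sup>2) \<longlonglongrightarrow> 0"
proof -
  have "eventually (\<lambda>K. summable (\<lambda>k. norm ((cmod (if k < K then 0 else x k))\<^sup>2))) sequentially \<and>
      summable (\<lambda>k. norm ((\<lambda>k. 0::real) k)) \<and>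
      ((\<lambda>K. \<Sum>k. (cmod (if k < K then 0 else x k))\<^sup>2) \<longlonglongrightarrow> (\<Sum>k. 0))"
  proof (rule tannerys_theorem[where M = "\<lambda>k. (cmod (x k))\<^sup>2"])
    show "(\<lambda>K. (cmod (if k < K then 0 else x k))\<^sup>2) \<longlonglongrightarrow> 0" for k
      by (rule tendsto_eventually) (use eventually_gt_at_top[of k] in eventually_elim, auto)
  next
    show "\<forall>\<^sub>F (k, K) in sequentially \<times>\<^sub>F sequentially.
        norm ((cmod (if k < K then 0 else x k))\<^sup>2) \<le> (cmod (x k))\<^sup>2"
      by (rule always_eventually) auto
  qed (use assms in \<open>auto simp: l2_def\<close>)
  then show ?thesis by simp
qed

definition ket :: "nat \<Rightarrow> nat \<Rightarrow> complex" where
  "ket n = (\<lambda>k. if k = n then 1 else 0)"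

lemma ket_in_l2: "ket n \<in> l2"
  by (rule l2_finite_support[of "{n}"]) (auto simp: ket_def)

lemma bounded_op_linear:
  assumes "bounded_op A" "x \<in> l2" "y \<in> l2"
  shows "A (\<lambda>n. a * x n + b * y n) = (\<lambda>n. a * A x n + b * A y n)"
  using assms unfolding bounded_op_def by blast

lemma bounded_op_in_l2: "bounded_op A \<Longrightarrow> x \<in> l2 \<Longrightarrow> A x \<in> l2"
  unfolding bounded_op_def by blast

lemma bounded_op_zero:
  assumes "bounded_op A"
  shows "A (\<lambda>n. 0) = (\<lambda>n. 0)"
  using bounded_op_linear[OF assms l2_zero l2_zero, of 0 0] by simp

lemma bounded_op_sum:
  assumes A: "bounded_op A" and "finite I" and "\<And>i. i \<in> I \<Longrightarrow> v i \<in> l2"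
  shows "(\<lambda>k. \<Sum>i\<in>I. w i * v i k) \<in> l2 \<and> A (\<lambda>k. \<Sum>i\<in>I. w i * v i k) = (\<lambda>k. \<Sum>i\<in>I. w i * A (v i) k)"
  using assms(2,3)
proof (induction I rule: finite_induct)
  case empty
  then show ?case using bounded_op_zero[OF A] l2_zero by simp
next
  case (insert i I)
  then have IH: "(\<lambda>k. \<Sum>i\<in>I. w i * v i k) \<in> l2"
      "A (\<lambda>k. \<Sum>i\<in>I. w i * v i k) = (\<lambda>k. \<Sum>i\<in>I. w i * A (v i) k)"
    and vi: "v i \<in> l2" by auto
  have eq: "(\<lambda>k. \<Sum>i\<in>insert i I. w i * v i k) = (\<lambda>k. w i * v i k + 1 * (\<Sum>i\<in>I. w i * v i k))"
    using insert by simp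
  show ?case
    unfolding eq bounded_op_linear[OF A vi IH(1)]
    using l2_linear_combination[OF vi IH(1), of "w i" 1] insert.hyps by (simp add: IH(2))
qed

lemma bounded_op_coord_tendsto_0:
  assumes A: "bounded_op A" and T: "\<And>N. T N \<in> l2"
    and lim: "(\<lambda>N. \<Sum>k. (cmod (T N k))\<^sup>2) \<longlonglongrightarrow> 0"
  shows "(\<lambda>N. A (T N) m) \<longlonglongrightarrow> 0"
proof -
  obtain C where C: "\<And>x. x \<in> l2 \<Longrightarrow> l2_norm (A x) \<le> C * l2_norm x"
    using A unfolding bounded_op_def by blast
  have bound: "norm (A (T N) m) \<le> C * sqrt (\<Sum>k. (cmod (T N k))\<^sup>2)" for N
    using order_trans[OF abs_coord_le_l2_norm[OF bounded_op_in_l2[OF A T]] C[OF T]]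
    unfolding l2_norm_def by simp
  have "(\<lambda>N. C * sqrt (\<Sum>k. (cmod (T N k))\<^sup>2)) \<longlonglongrightarrow> C * sqrt 0"
    by (intro tendsto_intros lim)
  then have "(\<lambda>N. C * sqrt (\<Sum>k. (cmod (T N k))\<^sup>2)) \<longlonglongrightarrow> 0"
    by simp
  then show ?thesis
    by (rule Lim_null_comparison[rotated]) (use bound in auto)
qed

lemma eq_if_eventually_diff_eq_null_sequence:
  fixes a b :: complex
  assumes "f \<longlonglongrightarrow> 0" "eventually (\<lambda>N. a - b = f N) sequentially"
  shows "a = b"
proof -
  have "(\<lambda>N. a - b) \<longlonglongrightarrow> 0"
    using assms(1) by (rule Lim_transform_eventually) (use assms(2) in \<open>eventually_elim, simp\<close>)
  then show ?thesis by (simp add: LIMSEQ_const_iff)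
qed

lemma sum_mult_ket: "(\<Sum>i<K. x i * ket i k) = (if k < K then x k else 0)"
proof -
  have "(\<Sum>i<K. x i * ket i k) = (\<Sum>i<K. if k = i then x i else 0)"
    by (intro sum.cong refl) (simp add: ket_def)
  then show ?thesis by simp
qed

lemma bounded_op_eq_scalar_if_ket:
  assumes A: "bounded_op A" and ket: "\<And>i k. A (ket i) k = c * ket i k" and x: "x \<in> l2"
  shows "A x = (\<lambda>m. c * x m)"
proof
  fix m
  define head where "head K = (\<lambda>k. if k < K then x k else 0)" for K
  have head_sum: "head K = (\<lambda>k. \<Sum>i<K. x i * ket i k)" for K
    unfolding head_def sum_mult_ket ..
  have A_head_sum: "(\<lambda>k. \<Sum>i<K. x i * A (ket i) k) = (\<lambda>k. c * head K k)" for K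
    unfolding ket head_sum by (simp add: sum_distrib_left mult_ac)
  have head: "head K \<in> l2" and A_head: "A (head K) = (\<lambda>k. c * head K k)" for K
    using bounded_op_sum[OF A finite_lessThan, of K ket x] ket_in_l2
    unfolding head_sum[symmetric] A_head_sum by auto
  define tail where "tail K = (\<lambda>k. 1 * x k + (-1) * head K k)" for K
  have tail: "tail K \<in> l2" for K
    unfolding tail_def by (rule l2_linear_combination[OF x head])
  have "tail K = (\<lambda>k. if k < K then 0 else x k)" for K
    unfolding tail_def head_def by auto
  then have "(\<lambda>K. \<Sum>k. (cmod (tail K k))\<^sup>2) \<longlonglongrightarrow> 0"
    using l2_tail_tendsto_0[OF x] by simp
  then have "(\<lambda>K. A (tail K) m) \<longlonglongrightarrow> 0"
    by (rule bounded_op_coord_tendsto_0[OF A tail])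
  moreover have "eventually (\<lambda>K. A x m - c * x m = A (tail K) m) sequentially"
    using eventually_gt_at_top[of m]
  proof eventually_elim
    case (elim K)
    then show ?case
      unfolding tail_def bounded_op_linear[OF A x head] A_head by (simp add: head_def)
  qed
  ultimately show "A x m = c * x m"
    by (rule eq_if_eventually_diff_eq_null_sequence)
qed

section \<open>The canonical phase operators on \<open>l2\<close>\<close>

abbreviation phase_set :: "real set \<Rightarrow> bool" where
  "phase_set \<Theta> \<equiv> \<Theta> \<in> sets borel \<and> \<Theta> \<subseteq> {0..<2*pi}"

lemma can_phase_coeff_eq_fourier_coeff_on:
  "can_phase_coeff \<Theta> k = fourier_coeff_on \<Theta> (\<lambda>_. 1) k"
  unfolding can_phase_coeff_def fourier_coeff_on_def circle_char_def by (simp add: field_simps)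

lemma sum_can_phase_coeff_sq_le_1:
  assumes "phase_set \<Theta>" "finite J"
  shows "(\<Sum>j\<in>J. (cmod (can_phase_coeff \<Theta> j))\<^sup>2) \<le> 1"
proof -
  have \<Theta>: "\<Theta> \<subseteq> {0..2*pi}" using assms by auto
  have "(\<Sum>j\<in>J. (cmod (can_phase_coeff \<Theta> j))\<^sup>2) \<le> (LINT t:\<Theta>|lborel. (cmod (1::complex))\<^sup>2) / (2*pi)"
    unfolding can_phase_coeff_eq_fourier_coeff_on using assms \<Theta>
    by (intro bessel_inequality_on) auto
  also have "\<dots> \<le> (LINT t:{0..2*pi}|lborel. (cmod (1::complex))\<^sup>2) / (2*pi)"
    using assms \<Theta> by (intro divide_right_mono set_integral_subset_mono_period) auto
  also have "\<dots> = 1" by (simp add: set_integral_const)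
  finally show ?thesis .
qed

lemma summable_can_phase_coeff_sq:
  assumes "phase_set \<Theta>" "inj \<phi>"
  shows "summable (\<lambda>n. (cmod (can_phase_coeff \<Theta> (\<phi> n)))\<^sup>2)"
proof (rule bounded_imp_summable)
  fix n
  have "(\<Sum>k\<le>n. (cmod (can_phase_coeff \<Theta> (\<phi> k)))\<^sup>2) = (\<Sum>j\<in>\<phi> ` {..n}. (cmod (can_phase_coeff \<Theta> j))\<^sup>2)"
    using assms(2) by (simp add: sum.reindex inj_on_def inj_def)
  also have "\<dots> \<le> 1" using assms by (intro sum_can_phase_coeff_sq_le_1) auto
  finally show "(\<Sum>k\<le>n. (cmod (can_phase_coeff \<Theta> (\<phi> k)))\<^sup>2) \<le> 1" .
qed simp

lemma summable_E_can_series: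
  assumes "phase_set \<Theta>" "x \<in> l2"
  shows "summable (\<lambda>n. can_phase_coeff \<Theta> (int m - int n) * x n)"
proof -
  have "inj (\<lambda>n::nat. int m - int n)" by (auto simp: inj_def)
  then show ?thesis
    using summable_can_phase_coeff_sq[OF assms(1)] assms(2)
    by (intro summable_mult_if_square_summable) (auto simp: l2_def)
qed

text \<open>A truncation of \<open>x\<close> is the coefficient sequence of the trigonometric polynomial
  \<open>P t = \<Sum>n<K. x n exp (-i n t)\<close>, and the truncated \<open>E_can \<Theta>\<close> lists its coefficients on \<open>\<Theta>\<close>.\<close>

lemma sum_E_can_truncated_sq_le:
  assumes "phase_set \<Theta>" "finite M"
  shows "(\<Sum>m\<in>M. (cmod (\<Sum>n<K. can_phase_coeff \<Theta> (int m - int n) * x n))\<^sup>2)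
     \<le> (\<Sum>n<K. (cmod (x n))\<^sup>2)"
proof -
  have \<Theta>: "\<Theta> \<subseteq> {0..2*pi}" "\<Theta> \<in> sets borel" using assms by auto
  define P where "P t = (\<Sum>n<K. x n * circle_char (- int n) t)" for t
  have P_cont: "continuous_on {0..2*pi} P"
    unfolding P_def by (intro continuous_intros continuous_on_id)
  have coeff: "fourier_coeff_on \<Theta> P j = (\<Sum>n<K. can_phase_coeff \<Theta> (j - int n) * x n)" for j
  proof -
    have "(\<lambda>t. P t * circle_char j t) = (\<lambda>t. \<Sum>n<K. x n * circle_char (j - int n) t)"
      by (simp add: P_def sum_distrib_right mult.assoc circle_char_mult)
    then have "(LINT t:\<Theta>|lborel. P t * circle_char j t)
        = (\<Sum>n<K. x n * (LINT t:\<Theta>|lborel. circle_char (j - int n) t))"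
      using \<Theta> by (simp add: set_integral_sum set_integrable_continuous_on_period continuous_intros)
    then show ?thesis
      by (simp add: can_phase_coeff_eq_fourier_coeff_on fourier_coeff_on_def sum_divide_distrib mult_ac)
  qed
  have "(\<Sum>m\<in>M. (cmod (\<Sum>n<K. can_phase_coeff \<Theta> (int m - int n) * x n))\<^sup>2)
      = (\<Sum>j\<in>int ` M. (cmod (fourier_coeff_on \<Theta> P j))\<^sup>2)"
    by (simp add: coeff sum.reindex)
  also have "\<dots> \<le> (LINT t:\<Theta>|lborel. (cmod (P t))\<^sup>2) / (2*pi)"
    using \<Theta> P_cont assms(2) by (intro bessel_inequality_on) auto
  also have "\<dots> \<le> (LINT t:{0..2*pi}|lborel. (cmod (P t))\<^sup>2) / (2*pi)"
    using \<Theta> P_cont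
    by (intro divide_right_mono set_integral_subset_mono_period continuous_intros) auto
  also have "\<dots> = (\<Sum>n<K. (cmod (x n))\<^sup>2)"
    unfolding P_def by (subst set_integral_trig_poly_norm_sq) (auto simp: inj_on_def)
  finally show ?thesis .
qed

lemma E_can_in_l2:
  assumes "phase_set \<Theta>" "x \<in> l2"
  shows "E_can \<Theta> x \<in> l2"
proof -
  have x: "summable (\<lambda>n. (cmod (x n))\<^sup>2)" using assms(2) by (simp add: l2_def)
  have "(\<Sum>m\<in>M. (cmod (E_can \<Theta> x m))\<^sup>2) \<le> (\<Sum>n. (cmod (x n))\<^sup>2)" if "finite M" for M
  proof (rule LIMSEQ_le_const2)
    show "(\<lambda>K. \<Sum>m\<in>M. (cmod (\<Sum>n<K. can_phase_coeff \<Theta> (int m - int n) * x n))\<^sup>2)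
        \<longlonglongrightarrow> (\<Sum>m\<in>M. (cmod (E_can \<Theta> x m))\<^sup>2)"
      unfolding E_can_def by (intro tendsto_intros summable_LIMSEQ summable_E_can_series assms)
    show "\<exists>N. \<forall>K\<ge>N. (\<Sum>m\<in>M. (cmod (\<Sum>n<K. can_phase_coeff \<Theta> (int m - int n) * x n))\<^sup>2)
        \<le> (\<Sum>n. (cmod (x n))\<^sup>2)"
      using order_trans[OF sum_E_can_truncated_sq_le[OF assms(1) that] sum_le_suminf[OF x]] by auto
  qed
  then have "summable (\<lambda>m. (cmod (E_can \<Theta> x m))\<^sup>2)"
    by (intro bounded_imp_summable) auto
  then show ?thesis by (simp add: l2_def)
qed

lemma E_can_scale:
  assumes "phase_set \<Theta>" "x \<in> l2"
  shows "E_can \<Theta> (\<lambda>n. c * x n) = (\<lambda>m. c * E_can \<Theta> x m)"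
  unfolding E_can_def using suminf_mult[OF summable_E_can_series[OF assms], of c]
  by (simp add: mult_ac)

lemma E_can_ket: "E_can \<Theta> (ket n) = (\<lambda>k. can_phase_coeff \<Theta> (int k - int n))"
proof
  fix k
  have "(\<lambda>l. can_phase_coeff \<Theta> (int k - int l) * ket n l)
      = (\<lambda>l. if l = n then can_phase_coeff \<Theta> (int k - int l) else 0)"
    by (auto simp: ket_def)
  then show "E_can \<Theta> (ket n) k = can_phase_coeff \<Theta> (int k - int n)"
    unfolding E_can_def using sums_unique[OF sums_single[of n "\<lambda>l. can_phase_coeff \<Theta> (int k - int l)"]] by simp
qed

lemma can_phase_coeff_Ico:
  assumes "a \<le> b"
  shows "can_phase_coeff {a..<b} j =
    (if j = 0 then complex_of_real (b - a)
     else (circle_char j b - circle_char j a) / (\<i> * of_int j)) / of_real (2*pi)"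
  using assms
  by (simp add: can_phase_coeff_eq_fourier_coeff_on fourier_coeff_on_def
      set_integral_circle_char_Ico set_integral_circle_char_Icc)

section \<open>Averaging the phase operators over arcs\<close>

lemma can_phase_coeff_shift:
  assumes "0 \<le> d"
  shows "can_phase_coeff {s..<s + d} j = circle_char j s * can_phase_coeff {0..<d} j"
  using assms by (simp add: can_phase_coeff_Ico circle_char_add field_simps)

definition phase_arc :: "nat \<Rightarrow> nat \<Rightarrow> real set" where
  "phase_arc N r = {2*pi*r/N ..< 2*pi*r/N + 2*pi/N}"

lemma phase_set_phase_arc:
  assumes "r < N"
  shows "phase_set (phase_arc N r)"
proof -
  have "2*pi*r/N + 2*pi/N = 2*pi * (real r + 1) / N" using assms by (simp add: field_simps)
  also have "\<dots> \<le> 2*pi"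
    using assms mult_left_mono[of "real r + 1" "real N" "2*pi"] by (simp add: field_simps)
  finally show ?thesis unfolding phase_arc_def by auto
qed

definition arc_factor :: "nat \<Rightarrow> int \<Rightarrow> complex" where
  "arc_factor N p = of_nat N * (circle_char p (2*pi/N) - 1) / (2 * of_real pi * \<i>)"

definition arc_kernel :: "nat \<Rightarrow> int \<Rightarrow> int \<Rightarrow> complex" where
  "arc_kernel N p j = (if int N dvd (j - p) then 1 / of_int j else 0)"

lemma arc_factor_nonzero:
  assumes "N > 0" "\<not> int N dvd p"
  shows "arc_factor N p \<noteq> 0"
  using assms circle_char_root_eq_1_iff[OF assms(1), of p] by (simp add: arc_factor_def)

text \<open>The weights \<open>exp (-i p 2\<pi>r/N)\<close> filter the residue class of \<open>p\<close> modulo \<open>N\<close> out of the arc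
  coefficients.\<close>

lemma sum_arc_can_phase_coeff:
  assumes N: "N > 0" and p: "\<not> int N dvd p"
  shows "(\<Sum>r<N. circle_char (-p) (2*pi*r/N) * can_phase_coeff (phase_arc N r) j) = arc_factor N p * arc_kernel N p j"
proof -
  have "(\<Sum>r<N. circle_char (-p) (2*pi*r/N) * can_phase_coeff (phase_arc N r) j)
      = can_phase_coeff {0..<2*pi/N} j * (\<Sum>r<N. circle_char (j - p) (2*pi*r/N))"
    unfolding phase_arc_def
    by (simp add: can_phase_coeff_shift sum_distrib_left mult_ac circle_char_mult)
  also have "\<dots> = can_phase_coeff {0..<2*pi/N} j * (if int N dvd (j - p) then of_nat N else 0)"
    using sum_circle_char_roots[OF N] by simp
  also have "\<dots> = arc_factor N p * arc_kernel N p j"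
  proof (cases "int N dvd (j - p)")
    case True
    then have "j \<noteq> 0" using p by auto
    moreover have "circle_char j (2*pi/N) = circle_char p (2*pi/N)"
      using True circle_char_root_eq_1_iff[OF N, of "j - p"] circle_char_mult[of "j - p" "2*pi/N" p]
      by simp
    ultimately show ?thesis
      using True N by (simp add: can_phase_coeff_Ico arc_factor_def arc_kernel_def field_simps)
  qed (simp add: arc_kernel_def)
  finally show ?thesis .
qed

lemma commutant_arc_average:
  assumes A: "bounded_op A" and H: "\<And>\<Theta> x. phase_set \<Theta> \<Longrightarrow> x \<in> l2 \<Longrightarrow> A (E_can \<Theta> x) = E_can \<Theta> (A x)"
    and N: "N > 0" and p: "\<not> int N dvd p"
  shows "A (\<lambda>k. arc_factor N p * arc_kernel N p (int k - int n)) m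
    = (\<Sum>l. arc_factor N p * arc_kernel N p (int m - int l) * A (ket n) l)"
proof -
  define w where "w r = circle_char (-p) (2*pi*r/N)" for r :: nat
  define a where "a = A (ket n)"
  have a: "a \<in> l2" unfolding a_def by (rule bounded_op_in_l2[OF A ket_in_l2])
  have arc: "phase_set (phase_arc N r)" if "r \<in> {..<N}" for r
    using phase_set_phase_arc that by simp
  have "(\<lambda>k. arc_factor N p * arc_kernel N p (int k - int n)) = (\<lambda>k. \<Sum>r<N. w r * E_can (phase_arc N r) (ket n) k)"
    unfolding w_def E_can_ket using sum_arc_can_phase_coeff[OF N p] by simp
  then have "A (\<lambda>k. arc_factor N p * arc_kernel N p (int k - int n)) m = (\<Sum>r<N. w r * A (E_can (phase_arc N r) (ket n)) m)"
    using bounded_op_sum[OF A, of "{..<N}" "\<lambda>r. E_can (phase_arc N r) (ket n)" w]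
    by (simp add: E_can_in_l2 arc ket_in_l2)
  also have "\<dots> = (\<Sum>r<N. w r * E_can (phase_arc N r) a m)"
    using arc by (intro sum.cong refl) (simp add: H ket_in_l2 a_def)
  also have "\<dots> = (\<Sum>r<N. \<Sum>l. w r * (can_phase_coeff (phase_arc N r) (int m - int l) * a l))"
    unfolding E_can_def using arc
    by (intro sum.cong refl suminf_mult[symmetric] summable_E_can_series a) simp
  also have "\<dots> = (\<Sum>l. \<Sum>r<N. w r * (can_phase_coeff (phase_arc N r) (int m - int l) * a l))"
    using arc by (intro suminf_sum[symmetric] summable_mult summable_E_can_series a) simp
  also have "\<dots> = (\<Sum>l. arc_factor N p * arc_kernel N p (int m - int l) * a l)"
    using sum_arc_can_phase_coeff[OF N p]
    by (simp add: w_def sum_distrib_right[symmetric] mult.assoc[symmetric])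
  finally show ?thesis unfolding a_def .
qed

definition arc_kernel_tail :: "nat \<Rightarrow> int \<Rightarrow> int \<Rightarrow> complex" where
  "arc_kernel_tail N p j = (if int N dvd (j - p) \<and> j \<noteq> p then 1 / of_int j else 0)"

lemma arc_kernel_split: "arc_kernel N p j = (if j = p then 1 / of_int p else 0) + arc_kernel_tail N p j"
  by (simp add: arc_kernel_def arc_kernel_tail_def)

lemma arc_kernel_tail_sq_le: "(cmod (arc_kernel_tail N p j))\<^sup>2 \<le> 1 / (real_of_int j)\<^sup>2"
  by (auto simp: arc_kernel_tail_def norm_divide power_divide)

lemma eventually_not_dvd:
  assumes "q \<noteq> 0"
  shows "eventually (\<lambda>N. N > 0 \<and> \<not> int N dvd q) sequentially"
  using eventually_gt_at_top[of "nat \<bar>q\<bar>"]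
proof eventually_elim
  case (elim N)
  then show ?case using assms dvd_imp_le_int[of q "int N"] by auto
qed

lemma eventually_arc_kernel_tail_eq_0: "eventually (\<lambda>N. arc_kernel_tail N p j = 0) sequentially"
proof (cases "j = p")
  case False
  then have "j - p \<noteq> 0" by simp
  from eventually_not_dvd[OF this] show ?thesis
    by eventually_elim (simp add: arc_kernel_tail_def)
qed (simp add: arc_kernel_tail_def)

lemma summable_inverse_sq_shift: "summable (\<lambda>k::nat. 1 / (real_of_int (int k - c))\<^sup>2)"
proof (rule summable_comparison_test_ev)
  show "summable (\<lambda>k::nat. 4 * inverse (real k ^ 2))"
    by (intro summable_mult inverse_power_summable) auto
  have "\<forall>\<^sub>F k in sequentially. real k \<ge> 2 * \<bar>real_of_int c\<bar> + 1"
    by real_asymp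
  then show "\<forall>\<^sub>F k in sequentially. norm (1 / (real_of_int (int k - c))\<^sup>2) \<le> 4 * inverse (real k ^ 2)"
  proof eventually_elim
    case (elim k)
    then have pos: "real k / 2 \<le> real k - real_of_int c" "0 < real k" by auto
    then have "(real k / 2)\<^sup>2 \<le> (real k - real_of_int c)\<^sup>2"
      by (intro power_mono) auto
    then have "1 / (real k - real_of_int c)\<^sup>2 \<le> 1 / (real k / 2)\<^sup>2"
      using pos by (intro divide_left_mono) auto
    then show ?case by (simp add: field_simps)
  qed
qed

lemma summable_inverse_sq_shift': "summable (\<lambda>k::nat. 1 / (real_of_int (c - int k))\<^sup>2)"
  using summable_inverse_sq_shift[of c] by (simp add: power2_commute)

lemma arc_kernel_tail_in_l2: "(\<lambda>k. arc_kernel_tail N p (int k - int n)) \<in> l2"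
  unfolding l2_def
  by (rule CollectI, rule summable_comparison_test[OF _ summable_inverse_sq_shift[of "int n"]])
    (use arc_kernel_tail_sq_le[of N p "int k - int n" for k] in auto)

lemma summable_arc_kernel_tail_mult:
  assumes "a \<in> l2"
  shows "summable (\<lambda>l. arc_kernel_tail N p (int m - int l) * a l)"
proof (rule summable_mult_if_square_summable)
  show "summable (\<lambda>l. (cmod (arc_kernel_tail N p (int m - int l)))\<^sup>2)"
    by (rule summable_comparison_test[OF _ summable_inverse_sq_shift'[of "int m"]])
      (use arc_kernel_tail_sq_le[of N p "int m - int l" for l] in \<open>auto intro!: exI[of _ 0]\<close>)
qed (use assms in \<open>simp add: l2_def\<close>)

lemma arc_kernel_tail_l2_tendsto_0:
  "(\<lambda>N. \<Sum>k. (cmod (arc_kernel_tail N p (int k - int n)))\<^sup>2) \<longlonglongrightarrow> 0"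
proof -
  have "eventually (\<lambda>N. summable (\<lambda>k. norm ((cmod (arc_kernel_tail N p (int k - int n)))\<^sup>2))) sequentially \<and>
      summable (\<lambda>k. norm ((\<lambda>k. 0::real) k)) \<and>
      ((\<lambda>N. \<Sum>k. (cmod (arc_kernel_tail N p (int k - int n)))\<^sup>2) \<longlonglongrightarrow> (\<Sum>k. 0))"
  proof (rule tannerys_theorem[where M = "\<lambda>k. 1 / (real_of_int (int k - int n))\<^sup>2"])
    show "(\<lambda>N. (cmod (arc_kernel_tail N p (int k - int n)))\<^sup>2) \<longlonglongrightarrow> 0" for k
      by (rule tendsto_eventually)
        (use eventually_arc_kernel_tail_eq_0[of p "int k - int n"] in \<open>eventually_elim, simp\<close>)
  next
    show "\<forall>\<^sub>F (k, N) in sequentially \<times>\<^sub>F sequentially.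
        norm ((cmod (arc_kernel_tail N p (int k - int n)))\<^sup>2) \<le> 1 / (real_of_int (int k - int n))\<^sup>2"
      using arc_kernel_tail_sq_le[of N p "int k - int n" for k N] by (intro always_eventually) auto
  qed (use summable_inverse_sq_shift[of "int n"] in auto)
  then show ?thesis by simp
qed

lemma arc_kernel_tail_apply_tendsto_0:
  assumes "a \<in> l2"
  shows "(\<lambda>N. \<Sum>l. arc_kernel_tail N p (int m - int l) * a l) \<longlonglongrightarrow> 0"
proof -
  define M where "M l = (1 / (real_of_int (int m - int l))\<^sup>2 + (cmod (a l))\<^sup>2) / 2" for l
  have "summable M"
    unfolding M_def using assms summable_inverse_sq_shift'[of "int m"]
    by (intro summable_divide summable_add) (auto simp: l2_def)
  have bound: "norm (arc_kernel_tail N p (int m - int l) * a l) \<le> M l" for N l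
    using sum_squares_bound[of "cmod (arc_kernel_tail N p (int m - int l))" "cmod (a l)"]
      arc_kernel_tail_sq_le[of N p "int m - int l"]
    by (simp add: M_def norm_mult)
  have "eventually (\<lambda>N. summable (\<lambda>l. norm (arc_kernel_tail N p (int m - int l) * a l))) sequentially \<and>
      summable (\<lambda>l. norm ((\<lambda>l. 0::complex) l)) \<and>
      ((\<lambda>N. \<Sum>l. arc_kernel_tail N p (int m - int l) * a l) \<longlonglongrightarrow> (\<Sum>l. 0))"
  proof (rule tannerys_theorem[where M = M])
    show "(\<lambda>N. arc_kernel_tail N p (int m - int l) * a l) \<longlonglongrightarrow> 0" for l
      by (rule tendsto_eventually)
        (use eventually_arc_kernel_tail_eq_0[of p "int m - int l"] in \<open>eventually_elim, simp\<close>)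
  qed (auto intro: always_eventually bound \<open>summable M\<close>)
  then show ?thesis by simp
qed

section \<open>The commutant of the canonical phase observable\<close>

lemma bounded_op_arc_kernel_split:
  assumes A: "bounded_op A" and p: "p \<noteq> 0"
  shows "A (\<lambda>k. c * arc_kernel N p (int k - int n)) m
    = c / of_int p * A (\<lambda>k. if int k - int n = p then 1 else 0) m
      + c * A (\<lambda>k. arc_kernel_tail N p (int k - int n)) m"
proof -
  define \<delta> where "\<delta> = (\<lambda>k. if int k - int n = p then (1::complex) else 0)"
  have \<delta>: "\<delta> \<in> l2"
    by (rule l2_finite_support[of "{nat (int n + p)}"]) (auto simp: \<delta>_def)
  have split: "(\<lambda>k. c * arc_kernel N p (int k - int n))
      = (\<lambda>k. c / of_int p * \<delta> k + c * arc_kernel_tail N p (int k - int n))"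
    by (auto simp: arc_kernel_split \<delta>_def algebra_simps)
  show ?thesis
    unfolding split bounded_op_linear[OF A \<delta> arc_kernel_tail_in_l2] by (simp add: \<delta>_def)
qed

lemma suminf_arc_kernel_split:
  assumes a: "a \<in> l2"
  shows "(\<Sum>l. c * arc_kernel N p (int m - int l) * a l)
    = c / of_int p * (\<Sum>l. if int m - int l = p then a l else 0)
      + c * (\<Sum>l. arc_kernel_tail N p (int m - int l) * a l)"
proof -
  have R: "summable (\<lambda>l. if int m - int l = p then a l else 0)"
    by (rule summable_finite[of "{nat (int m - p)}"]) auto
  have S: "summable (\<lambda>l. arc_kernel_tail N p (int m - int l) * a l)"
    using a by (rule summable_arc_kernel_tail_mult)
  have "(\<lambda>l. c * arc_kernel N p (int m - int l) * a l) = (\<lambda>l. c / of_int p *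
      (if int m - int l = p then a l else 0) + c * (arc_kernel_tail N p (int m - int l) * a l))"
    by (auto simp: arc_kernel_split algebra_simps)
  then show ?thesis
    unfolding suminf_mult[OF R, symmetric] suminf_mult[OF S, symmetric]
    by (simp only:) (intro suminf_add[symmetric] summable_mult R S)
qed

lemma commutant_arc_kernel_tail:
  assumes A: "bounded_op A" and H: "\<And>\<Theta> x. phase_set \<Theta> \<Longrightarrow> x \<in> l2 \<Longrightarrow> A (E_can \<Theta> x) = E_can \<Theta> (A x)"
    and N: "N > 0" "\<not> int N dvd p" and p: "p \<noteq> 0"
  shows "A (\<lambda>k. if int k - int n = p then 1 else 0) m - (\<Sum>l. if int m - int l = p then A (ket n) l else 0)
    = of_int p * ((\<Sum>l. arc_kernel_tail N p (int m - int l) * A (ket n) l)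
                  - A (\<lambda>k. arc_kernel_tail N p (int k - int n)) m)"
    (is "?X - ?R = of_int p * (?S - ?Y)")
proof -
  define \<kappa> where "\<kappa> = arc_factor N p"
  have "\<kappa> / of_int p * ?X + \<kappa> * ?Y = \<kappa> / of_int p * ?R + \<kappa> * ?S"
    using commutant_arc_average[OF A H N, of n m] bounded_op_arc_kernel_split[OF A p]
      suminf_arc_kernel_split[OF bounded_op_in_l2[OF A ket_in_l2]]
    unfolding \<kappa>_def by simp
  then have "\<kappa> * (?X + of_int p * ?Y) = \<kappa> * (?R + of_int p * ?S)"
    using p by (simp add: field_simps)
  moreover have "\<kappa> \<noteq> 0" unfolding \<kappa>_def using arc_factor_nonzero[OF N] .
  ultimately have "?X + of_int p * ?Y = ?R + of_int p * ?S"
    by simp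
  then show ?thesis by (simp add: algebra_simps)
qed

text \<open>Entrywise, \<open>A\<close> commutes with shifting the number basis by \<open>p\<close>.\<close>

lemma commutant_shift:
  assumes A: "bounded_op A" and H: "\<And>\<Theta> x. phase_set \<Theta> \<Longrightarrow> x \<in> l2 \<Longrightarrow> A (E_can \<Theta> x) = E_can \<Theta> (A x)"
    and p: "p \<noteq> 0"
  shows "A (\<lambda>k. if int k - int n = p then 1 else 0) m = (\<Sum>l. if int m - int l = p then A (ket n) l else 0)"
proof -
  define f where "f N = of_int p * ((\<Sum>l. arc_kernel_tail N p (int m - int l) * A (ket n) l)
                  - A (\<lambda>k. arc_kernel_tail N p (int k - int n)) m)" for N
  have "f \<longlonglongrightarrow> of_int p * (0 - 0)"
    unfolding f_def
    by (intro tendsto_intros arc_kernel_tail_apply_tendsto_0 bounded_op_in_l2[OF A ket_in_l2]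
        bounded_op_coord_tendsto_0[OF A] arc_kernel_tail_in_l2 arc_kernel_tail_l2_tendsto_0)
  then have "f \<longlonglongrightarrow> 0" by simp
  moreover have "eventually (\<lambda>N. A (\<lambda>k. if int k - int n = p then 1 else 0) m
      - (\<Sum>l. if int m - int l = p then A (ket n) l else 0) = f N) sequentially"
    using eventually_not_dvd[OF p]
    by eventually_elim (use commutant_arc_kernel_tail[OF A H _ _ p] in \<open>simp add: f_def\<close>)
  ultimately show ?thesis by (rule eq_if_eventually_diff_eq_null_sequence)
qed

lemma suminf_if_diff_eq:
  "(\<Sum>l. if int m - int l = p then f l else (0::complex)) = (if p \<le> int m then f (nat (int m - p)) else 0)"
proof -
  have "(\<Sum>l. if int m - int l = p then f l else (0::complex)) =
      (\<Sum>l\<in>{nat (int m - p)}. if int m - int l = p then f l else 0)"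
    by (rule suminf_finite) auto
  then show ?thesis by auto
qed

lemma commutant_ket:
  assumes A: "bounded_op A" and H: "\<And>\<Theta> x. phase_set \<Theta> \<Longrightarrow> x \<in> l2 \<Longrightarrow> A (E_can \<Theta> x) = E_can \<Theta> (A x)"
  shows "A (ket n) m = A (ket 0) 0 * ket n m"
proof (induction n arbitrary: m)
  case 0
  show ?case
  proof (cases m)
    case (Suc m')
    have "(\<lambda>k::nat. if int k - int 0 = -1 then (1::complex) else 0) = (\<lambda>k. 0)" by auto
    then have "A (\<lambda>k. 0) m' = (\<Sum>l. if int m' - int l = -1 then A (ket 0) l else 0)"
      using commutant_shift[OF A H, of "-1" 0 m'] by simp
    then show ?thesis
      using Suc bounded_op_zero[OF A] by (simp add: suminf_if_diff_eq nat_add_distrib ket_def)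
  qed (simp add: ket_def)
next
  case (Suc n)
  have "(\<lambda>k::nat. if int k - int n = 1 then (1::complex) else 0) = ket (Suc n)"
    by (auto simp: ket_def)
  then have "A (ket (Suc n)) m = (if 1 \<le> int m then A (ket n) (nat (int m - 1)) else 0)"
    using commutant_shift[OF A H, of 1 n m] by (simp add: suminf_if_diff_eq)
  then show ?case using Suc.IH by (cases m) (auto simp: ket_def)
qed

lemma scalar_commutes_E_can:
  assumes "\<forall>x\<in>l2. A x = (\<lambda>n. c * x n)" "phase_set \<Theta>" "x \<in> l2"
  shows "A (E_can \<Theta> x) = E_can \<Theta> (A x)"
  using assms E_can_in_l2[OF assms(2,3)] E_can_scale[OF assms(2,3)] by simp

theorem mainTheorem1:
  fixes A :: "(nat \<Rightarrow> complex) \<Rightarrow> (nat \<Rightarrow> complex)"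
  assumes "bounded_op A"
  shows "(\<forall>\<Theta>. \<Theta> \<in> sets borel \<and> \<Theta> \<subseteq> {0..<2*pi} \<longrightarrow>
            (\<forall>x\<in>l2. A (E_can \<Theta> x) = E_can \<Theta> (A x)))
         \<longleftrightarrow> (\<exists>c::complex. \<forall>x\<in>l2. A x = (\<lambda>n. c * x n))"
proof
  assume "\<forall>\<Theta>. phase_set \<Theta> \<longrightarrow> (\<forall>x\<in>l2. A (E_can \<Theta> x) = E_can \<Theta> (A x))"
  then have "\<And>\<Theta> x. phase_set \<Theta> \<Longrightarrow> x \<in> l2 \<Longrightarrow> A (E_can \<Theta> x) = E_can \<Theta> (A x)"
    by blast
  then have "\<forall>x\<in>l2. A x = (\<lambda>m. A (ket 0) 0 * x m)"
    using bounded_op_eq_scalar_if_ket[OF assms commutant_ket[OF assms]] by blast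
  then show "\<exists>c. \<forall>x\<in>l2. A x = (\<lambda>n. c * x n)" ..
next
  assume "\<exists>c. \<forall>x\<in>l2. A x = (\<lambda>n. c * x n)"
  then show "\<forall>\<Theta>. phase_set \<Theta> \<longrightarrow> (\<forall>x\<in>l2. A (E_can \<Theta> x) = E_can \<Theta> (A x))"
    using scalar_commutes_E_can by blast
qed
end
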